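(* (1) Let $(Y^*,Y,X)$ be random variables with $Y^*,Y\in\{0,1\}$, $X=(\tilde X,Z)\in\mathcal X$, $\tilde X\in\tilde{\mathcal X}$, $Z$ taking values in a finite set $\mathcal Z$. Let $p(x)=\Pr(Y=1\mid X=x)$, $p^*(x)=\Pr(Y^*=1\mid X=x)$, $\underline p_z(\tilde x)=\inf_{z\in\mathcal Z}p(\tilde x,z)$, $\bar p_z(\tilde x)=\sup_{z\in\mathcal Z}p(\tilde x,z)$, $L_1(x)=\frac{p(x)-\underline p_z(\tilde x)}{1-\underline p_z(\tilde x)}$, $U_1(x)=\frac{p(x)}{\bar p_z(\tilde x)}$. Assume: for all $x=(\tilde x,z)$ and $y\in\{0,1\}$, $\Pr(Y=1-y\mid Y^*=y,X=x)=\Pr(Y=1-y\mid Y^*=y,\tilde X=\tilde x)$; for all $\tilde x$, $\Pr(Y=0\mid Y^*=1,\tilde x)+\Pr(Y=1\mid Y^*=0,\tilde x)\le1$; and for all $\tilde x$, $\bar p_z(\tilde x)>0$ and $\underline p_z(\tilde x)<1$. Then the sharp bounds for $p^*(x)$ are $[p(x),U_1(x)]$ when $\Pr(Y=1\mid Y^*=0,\tilde x)=0$, and $[L_1(x),p(x)]$ when $\Pr(Y=0\mid Y^*=1,\tilde x)=0$. (2) Let $(Y^*,Y,X,W)$ be random variables with $Y^*,Y\in\{0,1\}$, $X\in\mathcal X$, $W$ taking values in a finite set of reals $\mathcal W$. Let $p^*(x)=\Pr(Y^*=1\mid X=x)$, $p_W(x,w)=\Pr(Y=1\mid X=x,W=w)$,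 $\underline p_w(x,w)=\inf_{\tilde w\le w}p_W(x,\tilde w)$, $\bar p_w(x,w)=\sup_{\tilde w\le w}p_W(x,\tilde w)$ (over $\tilde w\in\mathcal W$), $L_2(x)=\sup_{w\in\mathcal W}\frac{p_W(x,w)-\underline p_w(x,w)}{1-\underline p_w(x,w)}$, $U_2(x)=\inf_{w\in\mathcal W}\frac{p_W(x,w)}{\bar p_w(x,w)}$. Assume: $\Pr(Y^*=1\mid x,w)=p^*(x)$ for all $x,w$; for all $x$, $y\in\{0,1\}$ and $w_1>w_2$ in $\mathcal W$, $\Pr(Y=1-y\mid Y^*=y,x,w_1)\le\Pr(Y=1-y\mid Y^*=y,x,w_2)$; for all $x,w$, $\Pr(Y=1\mid Y^*=0,x,w)+\Pr(Y=0\mid Y^*=1,x,w)\le1$ and $0<p_W(x,w)<1$. Then the sharp bounds for $p^*(x)$ are $[\sup_{w\in\mathcal W}p_W(x,w),U_2(x)]$ when $\Pr(Y=1\mid Y^*=0,x,w)=0$, and $[L_2(x),\inf_{w\in\mathcal W}p_W(x,w)]$ when $\Pr(Y=0\mid Y^*=1,x,w)=0$.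
   Context: $Y^*$ is the true (unobserved) binary outcome and $Y$ the observed, possibly misreported outcome; conditioning on $\tilde x$ (resp. $x,w$) means conditioning on $\tilde X=\tilde x$ (resp. $X=x,W=w$). "Sharp" means no tighter bounds on $p^*(x)$ are implied by the assumptions and the distribution of the observed variables. *)

theory Defs
  imports Complex_Main
begin

(* Misreporting probability Pr(Y = 1 - y | Y* = y, cond), given the kernel
   k y c = Pr(Y = 1 | Y* = y, cond). *)
definition misr :: "(bool \<Rightarrow> 'b \<Rightarrow> real) \<Rightarrow> bool \<Rightarrow> 'b \<Rightarrow> real" where
  "misr k y c = (if y then 1 - k True c else k False c)"

(* ps x = Pr(Y*=1 | X=x); q y x = Pr(Y=1 | Y*=y, X=x);
   observed p(x) = Pr(Y=1 | X=x) by the law of total probability *)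
definition obs1 :: "('a \<times> 'z \<Rightarrow> real) \<Rightarrow> (bool \<Rightarrow> 'a \<times> 'z \<Rightarrow> real) \<Rightarrow> 'a \<times> 'z \<Rightarrow> real" where
  "obs1 ps q x = ps x * q True x + (1 - ps x) * q False x"

(* qt y xt = Pr(Y=1 | Y*=y, Xtilde=xt).  Maintained assumptions of part (1). *)
definition model1 :: "('a \<times> 'z \<Rightarrow> real) \<Rightarrow> (bool \<Rightarrow> 'a \<times> 'z \<Rightarrow> real) \<Rightarrow> (bool \<Rightarrow> 'a \<Rightarrow> real) \<Rightarrow> bool" where
  "model1 ps q qt \<longleftrightarrow>
     (\<forall>x. 0 \<le> ps x \<and> ps x \<le> 1) \<and>
     (\<forall>y x. 0 \<le> q y x \<and> q y x \<le> 1) \<and>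
     (\<forall>y xt. 0 \<le> qt y xt \<and> qt y xt \<le> 1) \<and>
     (\<forall>y xt z. misr q y (xt, z) = misr qt y xt) \<and>
     (\<forall>xt. misr qt True xt + misr qt False xt \<le> 1)"

definition plow1 :: "('a \<times> 'z \<Rightarrow> real) \<Rightarrow> 'a \<Rightarrow> real" where
  "plow1 p xt = (INF z. p (xt, z))"

definition pup1 :: "('a \<times> 'z \<Rightarrow> real) \<Rightarrow> 'a \<Rightarrow> real" where
  "pup1 p xt = (SUP z. p (xt, z))"

definition L1 :: "('a \<times> 'z \<Rightarrow> real) \<Rightarrow> 'a \<times> 'z \<Rightarrow> real" where
  "L1 p x = (p x - plow1 p (fst x)) / (1 - plow1 p (fst x))"

definition U1 :: "('a \<times> 'z \<Rightarrow> real) \<Rightarrow> 'a \<times> 'z \<Rightarrow> real" where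
  "U1 p x = p x / pup1 p (fst x)"

(* Identified set of p*(x): all values of p*(x) over latent structures satisfying the
   maintained assumptions plus the extra restriction C and reproducing the observed p. *)
definition ident1 :: "((bool \<Rightarrow> 'a \<Rightarrow> real) \<Rightarrow> bool) \<Rightarrow> ('a \<times> 'z \<Rightarrow> real) \<Rightarrow> 'a \<times> 'z \<Rightarrow> real set" where
  "ident1 C p x = {ps' x | ps' q' qt'. model1 ps' q' qt' \<and> C qt' \<and> (\<forall>x'. obs1 ps' q' x' = p x')}"

(* psw x w = Pr(Y*=1 | X=x, W=w); q y x w = Pr(Y=1 | Y*=y, X=x, W=w) *)
definition obs2 :: "('x \<Rightarrow> real \<Rightarrow> real) \<Rightarrow> (bool \<Rightarrow> 'x \<Rightarrow> real \<Rightarrow> real) \<Rightarrow> 'x \<Rightarrow> real \<Rightarrow> real" where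
  "obs2 psw q x w = psw x w * q True x w + (1 - psw x w) * q False x w"

definition misr2 :: "(bool \<Rightarrow> 'x \<Rightarrow> real \<Rightarrow> real) \<Rightarrow> bool \<Rightarrow> 'x \<Rightarrow> real \<Rightarrow> real" where
  "misr2 q y x w = (if y then 1 - q True x w else q False x w)"

definition model2 :: "real set \<Rightarrow> ('x \<Rightarrow> real) \<Rightarrow> ('x \<Rightarrow> real \<Rightarrow> real) \<Rightarrow> (bool \<Rightarrow> 'x \<Rightarrow> real \<Rightarrow> real) \<Rightarrow> bool" where
  "model2 W ps psw q \<longleftrightarrow>
     (\<forall>x. 0 \<le> ps x \<and> ps x \<le> 1) \<and>
     (\<forall>x w. w \<in> W \<longrightarrow> psw x w = ps x) \<and>
     (\<forall>y x w. w \<in> W \<longrightarrow> 0 \<le> q y x w \<and> q y x w \<le> 1) \<and>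
     (\<forall>x y w1 w2. w1 \<in> W \<longrightarrow> w2 \<in> W \<longrightarrow> w1 > w2 \<longrightarrow> misr2 q y x w1 \<le> misr2 q y x w2) \<and>
     (\<forall>x w. w \<in> W \<longrightarrow> misr2 q False x w + misr2 q True x w \<le> 1)"

definition plow2 :: "real set \<Rightarrow> ('x \<Rightarrow> real \<Rightarrow> real) \<Rightarrow> 'x \<Rightarrow> real \<Rightarrow> real" where
  "plow2 W pW x w = (INF w' \<in> {w' \<in> W. w' \<le> w}. pW x w')"

definition pup2 :: "real set \<Rightarrow> ('x \<Rightarrow> real \<Rightarrow> real) \<Rightarrow> 'x \<Rightarrow> real \<Rightarrow> real" where
  "pup2 W pW x w = (SUP w' \<in> {w' \<in> W. w' \<le> w}. pW x w')"

definition L2 :: "real set \<Rightarrow> ('x \<Rightarrow> real \<Rightarrow> real) \<Rightarrow> 'x \<Rightarrow> real" where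
  "L2 W pW x = (SUP w \<in> W. (pW x w - plow2 W pW x w) / (1 - plow2 W pW x w))"

definition U2 :: "real set \<Rightarrow> ('x \<Rightarrow> real \<Rightarrow> real) \<Rightarrow> 'x \<Rightarrow> real" where
  "U2 W pW x = (INF w \<in> W. pW x w / pup2 W pW x w)"

definition ident2 :: "real set \<Rightarrow> ((bool \<Rightarrow> 'x \<Rightarrow> real \<Rightarrow> real) \<Rightarrow> bool) \<Rightarrow> ('x \<Rightarrow> real \<Rightarrow> real) \<Rightarrow> 'x \<Rightarrow> real set" where
  "ident2 W C pW x = {ps' x | ps' psw' q'. model2 W ps' psw' q' \<and> C q' \<and>
                        (\<forall>x' w. w \<in> W \<longrightarrow> obs2 psw' q' x' w = pW x' w)}"

end

(*
  In part (1) misreporting depends only on the fibre x~, so a single pair of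
  misreporting rates (a, c) governs all of p(x~, .): with no false positives
  p = p* c, hence c >= sup_z p and p* = p / c ranges over [p, p / sup_z p];
  every value is attained by refitting the latent structure on that fibre.
  In part (2) p* does not depend on w, so with no false positives
  p_W = p* c(w) with c increasing, which forces sup_{w' <= w} p_W = p_W, U2 = 1
  and p* in [sup_w p_W, 1].  The cases without false negatives follow by
  relabelling Y* and Y as 1 - Y* and 1 - Y, which swaps the two kinds of
  misreporting and turns the upper bounds U into the lower bounds 1 - U.
*)
theory Submission
  imports Defs
begin

lemma misr_simps [simp]:
  "misr k True c = 1 - k True c" "misr k False c = k False c"
  by (simp_all add: misr_def)

lemma misr2_simps [simp]:
  "misr2 q True x w = 1 - q True x w" "misr2 q False x w = q False x w"
  by (simp_all add: misr2_def)

lemma SUP_const_minus: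
  fixes f :: "'a \<Rightarrow> 'b::{conditionally_complete_linorder,ordered_ab_group_add}"
  assumes "bdd_below (f ` A)" "A \<noteq> {}"
  shows "(SUP a\<in>A. c - f a) = c - (INF a\<in>A. f a)"
  using Sup_add_eq[of "\<lambda>a. - f a" A c] uminus_cINF[OF assms]
  by (simp add: bdd_above_uminus_image assms)

lemma model1_iff:
  "model1 ps q qt \<longleftrightarrow>
     (\<forall>x. 0 \<le> ps x \<and> ps x \<le> 1) \<and> (\<forall>y xt. 0 \<le> qt y xt \<and> qt y xt \<le> 1) \<and>
     (\<forall>y xt z. q y (xt, z) = qt y xt) \<and> (\<forall>xt. qt False xt \<le> qt True xt)"
proof -
  have "misr q y (xt, z) = misr qt y xt \<longleftrightarrow> q y (xt, z) = qt y xt" for y xt z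
    by (cases y) auto
  then show ?thesis
    unfolding model1_def by (auto simp del: split_paired_All)
qed

lemma obs1_bounds:
  assumes "model1 ps q qt"
  shows "0 \<le> obs1 ps q x" "obs1 ps q x \<le> 1"
proof -
  have "0 \<le> ps x" "ps x \<le> 1" "0 \<le> q y x" "q y x \<le> 1" for y
    using assms unfolding model1_iff by (metis prod.collapse)+
  then show "0 \<le> obs1 ps q x" "obs1 ps q x \<le> 1"
    unfolding obs1_def by (simp_all add: convex_bound_le)
qed

lemma obs1_no_false_positives:
  assumes "model1 ps q qt" "misr qt False xt = 0"
  shows "obs1 ps q (xt, z) = ps (xt, z) * qt True xt"
  using assms by (simp add: obs1_def model1_iff)

lemma pup1_upper:
  fixes p :: "'a \<times> 'z::finite \<Rightarrow> real"
  shows "p (xt, z) \<le> pup1 p xt"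
  unfolding pup1_def by (rule cSUP_upper) auto

lemma pup1_least:
  fixes p :: "'a \<times> 'z::finite \<Rightarrow> real"
  assumes "\<And>z. p (xt, z) \<le> c"
  shows "pup1 p xt \<le> c"
  unfolding pup1_def by (rule cSUP_least) (auto simp: assms)

lemma model1_refit_no_false_positives:
  fixes ps :: "'a \<times> 'z \<Rightarrow> real"
  assumes M: "model1 ps q qt" and c: "0 < c" "c \<le> 1"
    and le: "\<And>z'. obs1 ps q (xt, z') \<le> c"
  obtains ps' q' qt' where "model1 ps' q' qt'" "misr qt' False xt = 0"
    "obs1 ps' q' = obs1 ps q" "ps' (xt, z) = obs1 ps q (xt, z) / c"
proof
  define p where "p = obs1 ps q"
  define ps' where "ps' x = (if fst x = xt then p x / c else ps x)" for x
  define qt' where "qt' y = (qt y)(xt := if y then c else 0)" for y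
  define q' :: "bool \<Rightarrow> 'a \<times> 'z \<Rightarrow> real" where "q' y x = qt' y (fst x)" for y x
  have "0 \<le> ps' x \<and> ps' x \<le> 1" for x
    using M obs1_bounds[OF M, of x] le[of "snd x"] c
    by (cases x) (auto simp: ps'_def p_def model1_iff divide_le_eq)
  then show "model1 ps' q' qt'"
    using M c by (auto simp: model1_iff q'_def qt'_def)
  show "misr qt' False xt = 0"
    by (simp add: qt'_def)
  show "obs1 ps' q' = obs1 ps q"
    using M c by (auto simp: fun_eq_iff obs1_def ps'_def q'_def qt'_def p_def model1_iff)
  show "ps' (xt, z) = obs1 ps q (xt, z) / c"
    by (simp add: ps'_def p_def)
qed

lemma ident1_no_false_positives:
  fixes ps :: "'a \<times> 'z::finite \<Rightarrow> real"
  assumes M: "model1 ps q qt" and P_pos: "pup1 (obs1 ps q) xt > 0"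
  shows "ident1 (\<lambda>qt. misr qt False xt = 0) (obs1 ps q) (xt, z)
           = {obs1 ps q (xt, z) .. U1 (obs1 ps q) (xt, z)}"
proof -
  define p where "p = obs1 ps q"
  define P where "P = pup1 p xt"
  have "P > 0" using P_pos by (simp add: P_def p_def)
  have p01: "0 \<le> p x" "p x \<le> 1" for x using obs1_bounds[OF M] by (simp_all add: p_def)
  have "P \<le> 1" unfolding P_def by (rule pup1_least) (rule p01)
  have U1: "U1 p (xt, z) = p (xt, z) / P" by (simp add: U1_def P_def)
  show ?thesis unfolding p_def[symmetric] U1
  proof (intro equalityI subsetI)
    fix t assume "t \<in> ident1 (\<lambda>qt. misr qt False xt = 0) p (xt, z)"
    then obtain ps' q' qt' where t: "t = ps' (xt, z)" and M': "model1 ps' q' qt'"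
      and no_fp: "misr qt' False xt = 0" and obs: "\<forall>x. obs1 ps' q' x = p x"
      unfolding ident1_def by blast
    define c where "c = qt' True xt"
    have c01: "0 \<le> c" "c \<le> 1" and ps'01: "0 \<le> ps' x" "ps' x \<le> 1" for x
      using M' by (simp_all add: model1_iff c_def del: split_paired_All)
    have p_eq: "p (xt, z') = ps' (xt, z') * c" for z'
      using obs1_no_false_positives[OF M' no_fp] obs by (simp add: c_def)
    have "P \<le> c"
      unfolding P_def by (rule pup1_least) (simp add: p_eq c01 ps'01 mult_left_le_one_le)
    have "p (xt, z) \<le> t"
      using ps'01 c01 by (simp add: p_eq t mult_left_le)
    moreover have "t \<le> p (xt, z) / P"
    proof -
      have "t = p (xt, z) / c" using \<open>P \<le> c\<close> \<open>P > 0\<close> by (simp add: p_eq t)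
      also have "\<dots> \<le> p (xt, z) / P"
        using \<open>P \<le> c\<close> \<open>P > 0\<close> p01 by (simp add: divide_left_mono)
      finally show ?thesis .
    qed
    ultimately show "t \<in> {p (xt, z) .. p (xt, z) / P}" by simp
  next
    fix t assume t: "t \<in> {p (xt, z) .. p (xt, z) / P}"
    define c where "c = (if p (xt, z) = 0 then 1 else p (xt, z) / t)"
    have c: "P \<le> c \<and> c \<le> 1 \<and> p (xt, z) / c = t"
    proof (cases "p (xt, z) = 0")
      case True
      then show ?thesis using t \<open>P \<le> 1\<close> by (simp add: c_def)
    next
      case False
      then have "t > 0" using t p01[of "(xt, z)"] by auto
      then show ?thesis using t False \<open>P > 0\<close> by (auto simp: c_def field_simps)
    qed
    have le: "p (xt, z') \<le> c" for z'
      using pup1_upper[of p xt z'] c by (simp add: P_def)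
    obtain ps' q' qt' where "model1 ps' q' qt'" "misr qt' False xt = 0"
      "obs1 ps' q' = p" "ps' (xt, z) = p (xt, z) / c"
      unfolding p_def by (rule model1_refit_no_false_positives[OF M, of c xt z])
        (use c \<open>P > 0\<close> le in \<open>auto simp: p_def\<close>)
    then show "t \<in> ident1 (\<lambda>qt. misr qt False xt = 0) p (xt, z)"
      unfolding ident1_def using c by auto
  qed
qed

definition flip_kernel :: "(bool \<Rightarrow> 'b \<Rightarrow> real) \<Rightarrow> bool \<Rightarrow> 'b \<Rightarrow> real" where
  "flip_kernel k y c = 1 - k (\<not> y) c"

lemma flip_kernel_flip_kernel [simp]: "flip_kernel (flip_kernel k) = k"
  by (simp add: fun_eq_iff flip_kernel_def)

lemma obs1_flip: "obs1 (\<lambda>x. 1 - ps x) (flip_kernel q) = (\<lambda>x. 1 - obs1 ps q x)"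
  by (simp add: fun_eq_iff obs1_def flip_kernel_def algebra_simps)

lemma model1_flip:
  "model1 (\<lambda>x. 1 - ps x) (flip_kernel q) (flip_kernel qt) \<longleftrightarrow> model1 ps q qt"
  unfolding model1_iff flip_kernel_def by (auto simp del: split_paired_All) (metis (full_types))+

lemma ident1_flip_mem:
  assumes "t \<in> ident1 C p x"
  shows "1 - t \<in> ident1 (\<lambda>qt. C (flip_kernel qt)) (\<lambda>x. 1 - p x) x"
proof -
  obtain ps q qt where "t = ps x" "model1 ps q qt" "C qt" "\<forall>x. obs1 ps q x = p x"
    using assms unfolding ident1_def by blast
  then show ?thesis
    unfolding ident1_def
    by (intro CollectI exI[of _ "\<lambda>x. 1 - ps x"] exI[of _ "flip_kernel q"] exI[of _ "flip_kernel qt"])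
      (simp add: model1_flip obs1_flip)
qed

lemma ident1_flip:
  "ident1 C p x = (-) 1 ` ident1 (\<lambda>qt. C (flip_kernel qt)) (\<lambda>x. 1 - p x) x"
proof
  show "ident1 C p x \<subseteq> (-) 1 ` ident1 (\<lambda>qt. C (flip_kernel qt)) (\<lambda>x. 1 - p x) x"
  proof
    fix t assume "t \<in> ident1 C p x"
    then have "1 - t \<in> ident1 (\<lambda>qt. C (flip_kernel qt)) (\<lambda>x. 1 - p x) x"
      by (rule ident1_flip_mem)
    then show "t \<in> (-) 1 ` ident1 (\<lambda>qt. C (flip_kernel qt)) (\<lambda>x. 1 - p x) x"
      by (rule image_eqI[rotated]) simp
  qed
  show "(-) 1 ` ident1 (\<lambda>qt. C (flip_kernel qt)) (\<lambda>x. 1 - p x) x \<subseteq> ident1 C p x"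
    using ident1_flip_mem[of _ "\<lambda>qt. C (flip_kernel qt)" "\<lambda>x. 1 - p x" x] by auto
qed

lemma pup1_flip:
  fixes p :: "'a \<times> 'z::finite \<Rightarrow> real"
  shows "pup1 (\<lambda>x. 1 - p x) xt = 1 - plow1 p xt"
  unfolding pup1_def plow1_def by (rule SUP_const_minus) auto

lemma L1_eq_flip_U1:
  fixes p :: "'a \<times> 'z::finite \<Rightarrow> real"
  assumes "plow1 p (fst x) \<noteq> 1"
  shows "L1 p x = 1 - U1 (\<lambda>x. 1 - p x) x"
  using assms by (simp add: L1_def U1_def pup1_flip field_simps)

lemma ident1_no_false_negatives:
  fixes ps :: "'a \<times> 'z::finite \<Rightarrow> real"
  assumes "model1 ps q qt" "plow1 (obs1 ps q) xt < 1"
  shows "ident1 (\<lambda>qt. misr qt True xt = 0) (obs1 ps q) (xt, z)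
           = {L1 (obs1 ps q) (xt, z) .. obs1 ps q (xt, z)}"
proof -
  have "ident1 (\<lambda>qt. misr qt False xt = 0) (\<lambda>x. 1 - obs1 ps q x) (xt, z)
          = {1 - obs1 ps q (xt, z) .. U1 (\<lambda>x. 1 - obs1 ps q x) (xt, z)}"
    using ident1_no_false_positives[of "\<lambda>x. 1 - ps x" "flip_kernel q" "flip_kernel qt" xt z]
    using assms by (simp add: model1_flip obs1_flip pup1_flip)
  then show ?thesis
    using assms by (simp add: ident1_flip[of _ "obs1 ps q"] flip_kernel_def L1_eq_flip_U1)
qed

lemma model2_kernel_mono:
  assumes "model2 W ps psw q" "w1 \<in> W" "w2 \<in> W" "w2 \<le> w1"
  shows "q True x w2 \<le> q True x w1" "q False x w1 \<le> q False x w2"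
proof -
  have "misr2 q y x w1 \<le> misr2 q y x w2" for y
    using assms unfolding model2_def by (cases "w1 = w2") auto
  from this[of True] this[of False]
  show "q True x w2 \<le> q True x w1" "q False x w1 \<le> q False x w2" by simp_all
qed

lemma obs2_no_false_positives:
  assumes "model2 W ps psw q" "w \<in> W" "misr2 q False x w = 0"
  shows "obs2 psw q x w = ps x * q True x w"
  using assms by (simp add: obs2_def model2_def)

lemma mono_on_obs2_no_false_positives:
  assumes M: "model2 W ps psw q" and no_fp: "\<forall>w\<in>W. misr2 q False x w = 0"
  shows "mono_on W (obs2 psw q x)"
proof (rule mono_onI)
  fix w2 w1 assume w: "w2 \<in> W" "w1 \<in> W" "w2 \<le> w1"
  have "0 \<le> ps x" using M by (simp add: model2_def)
  then show "obs2 psw q x w2 \<le> obs2 psw q x w1"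
    using w no_fp model2_kernel_mono[OF M w(2,1,3)]
    by (simp add: obs2_no_false_positives[OF M] mult_left_mono)
qed

lemma pup2_eq_of_mono_on:
  assumes "finite W" "w \<in> W" "mono_on W (pW x)"
  shows "pup2 W pW x w = pW x w"
  unfolding pup2_def
proof (rule antisym)
  show "(SUP w'\<in>{w' \<in> W. w' \<le> w}. pW x w') \<le> pW x w"
    using assms by (auto intro: cSUP_least mono_onD)
  show "pW x w \<le> (SUP w'\<in>{w' \<in> W. w' \<le> w}. pW x w')"
    using assms by (auto intro: cSUP_upper bdd_above_finite)
qed

lemma model2_refit_no_false_positives:
  assumes M: "model2 W ps psw q" and t: "0 \<le> t" "t \<le> 1"
    and c: "\<forall>w\<in>W. 0 \<le> c w \<and> c w \<le> 1" "mono_on W c"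
    and obs: "\<forall>w\<in>W. t * c w = obs2 psw q x w"
  obtains ps' psw' q' where "model2 W ps' psw' q'" "\<forall>w\<in>W. misr2 q' False x w = 0"
    "\<forall>x' w. w \<in> W \<longrightarrow> obs2 psw' q' x' w = obs2 psw q x' w" "ps' x = t"
proof
  define ps' where "ps' = ps(x := t)"
  define psw' where "psw' = psw(x := \<lambda>w. t)"
  define q' where "q' y = (q y)(x := if y then c else (\<lambda>w. 0))" for y
  have "misr2 q' y x' w1 \<le> misr2 q' y x' w2" if "w1 \<in> W" "w2 \<in> W" "w1 > w2" for y x' w1 w2
    using that model2_kernel_mono[OF M, of w1 w2 x'] c(2) unfolding q'_def
    by (cases y) (auto dest: mono_onD)
  then show "model2 W ps' psw' q'"
    using M t c(1) unfolding model2_def ps'_def psw'_def q'_def by auto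
  show "\<forall>w\<in>W. misr2 q' False x w = 0"
    by (simp add: q'_def)
  show "\<forall>x' w. w \<in> W \<longrightarrow> obs2 psw' q' x' w = obs2 psw q x' w"
    using obs by (simp add: obs2_def psw'_def q'_def)
  show "ps' x = t"
    by (simp add: ps'_def)
qed

lemma ident2_no_false_positives:
  assumes fin: "finite W" and "W \<noteq> {}" and M: "model2 W ps psw q"
    and no_fp: "\<forall>w\<in>W. misr2 q False x w = 0" and pos: "\<forall>w\<in>W. 0 < obs2 psw q x w"
  shows "ident2 W (\<lambda>q'. \<forall>w\<in>W. misr2 q' False x w = 0) (obs2 psw q) x
           = {(SUP w\<in>W. obs2 psw q x w) .. U2 W (obs2 psw q) x}"
proof -
  define p where "p = obs2 psw q"
  define S where "S = (SUP w\<in>W. p x w)"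
  have mono: "mono_on W (p x)"
    unfolding p_def using M no_fp by (rule mono_on_obs2_no_false_positives)
  have "U2 W p x = (INF w\<in>W. 1)"
    unfolding U2_def using pos fin mono
    by (intro INF_cong) (auto simp: pup2_eq_of_mono_on p_def dest: less_imp_neq[symmetric])
  then have U2: "U2 W p x = 1"
    using \<open>W \<noteq> {}\<close> by simp
  have p_le_S: "p x w \<le> S" if "w \<in> W" for w
    unfolding S_def using fin that by (auto intro: cSUP_upper bdd_above_finite)
  show ?thesis unfolding p_def[symmetric] S_def[symmetric] U2
  proof (intro equalityI subsetI)
    fix t assume "t \<in> ident2 W (\<lambda>q'. \<forall>w\<in>W. misr2 q' False x w = 0) p x"
    then obtain ps' psw' q' where t: "t = ps' x" and M': "model2 W ps' psw' q'"
      and no_fp': "\<forall>w\<in>W. misr2 q' False x w = 0"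
      and obs: "\<forall>x' w. w \<in> W \<longrightarrow> obs2 psw' q' x' w = p x' w"
      unfolding ident2_def by blast
    have t01: "0 \<le> t" "t \<le> 1" using M' by (simp_all add: model2_def t)
    have "p x w \<le> t" if w: "w \<in> W" for w
      using obs2_no_false_positives[OF M' w] no_fp' obs w M' t01
      by (auto simp: t model2_def mult_left_le)
    then have "S \<le> t"
      unfolding S_def using \<open>W \<noteq> {}\<close> by (intro cSUP_least) auto
    then show "t \<in> {S .. 1}" using t01 by simp
  next
    fix t assume t: "t \<in> {S .. 1}"
    obtain w0 where "w0 \<in> W" using \<open>W \<noteq> {}\<close> by blast
    then have "t > 0"
      using pos p_le_S[of w0] t by (auto simp: p_def)
    obtain ps' psw' q' where "model2 W ps' psw' q'" "\<forall>w\<in>W. misr2 q' False x w = 0"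
      "\<forall>x' w. w \<in> W \<longrightarrow> obs2 psw' q' x' w = p x' w" "ps' x = t"
    proof (rule model2_refit_no_false_positives[OF M, of t "\<lambda>w. p x w / t"])
      show "\<forall>w\<in>W. 0 \<le> p x w / t \<and> p x w / t \<le> 1"
        using pos p_le_S t \<open>t > 0\<close> by (force simp: p_def less_imp_le intro: order_trans)
      show "mono_on W (\<lambda>w. p x w / t)"
        using mono \<open>t > 0\<close> by (auto intro!: mono_onI divide_right_mono dest: mono_onD)
    qed (use t \<open>t > 0\<close> in \<open>auto simp: p_def\<close>)
    then show "t \<in> ident2 W (\<lambda>q'. \<forall>w\<in>W. misr2 q' False x w = 0) p x"
      unfolding ident2_def by blast
  qed
qed

definition flip_kernel2 :: "(bool \<Rightarrow> 'x \<Rightarrow> real \<Rightarrow> real) \<Rightarrow> bool \<Rightarrow> 'x \<Rightarrow> real \<Rightarrow> real" where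
  "flip_kernel2 q y x w = 1 - q (\<not> y) x w"

lemma flip_kernel2_flip_kernel2 [simp]: "flip_kernel2 (flip_kernel2 q) = q"
  by (simp add: fun_eq_iff flip_kernel2_def)

lemma misr2_flip_kernel2 [simp]: "misr2 (flip_kernel2 q) y x w = misr2 q (\<not> y) x w"
  by (cases y) (simp_all add: flip_kernel2_def)

lemma obs2_flip:
  "obs2 (\<lambda>x w. 1 - psw x w) (flip_kernel2 q) = (\<lambda>x w. 1 - obs2 psw q x w)"
  by (simp add: fun_eq_iff obs2_def flip_kernel2_def algebra_simps)

lemma model2_flip_imp:
  "model2 W ps psw q \<Longrightarrow> model2 W (\<lambda>x. 1 - ps x) (\<lambda>x w. 1 - psw x w) (flip_kernel2 q)"
  unfolding model2_def misr2_flip_kernel2 by (auto simp: flip_kernel2_def)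

lemma model2_flip:
  "model2 W (\<lambda>x. 1 - ps x) (\<lambda>x w. 1 - psw x w) (flip_kernel2 q) \<longleftrightarrow> model2 W ps psw q"
  using model2_flip_imp[of W "\<lambda>x. 1 - ps x" "\<lambda>x w. 1 - psw x w" "flip_kernel2 q"]
  by (auto intro: model2_flip_imp)

lemma ident2_flip_mem:
  assumes "t \<in> ident2 W C pW x"
  shows "1 - t \<in> ident2 W (\<lambda>q. C (flip_kernel2 q)) (\<lambda>x w. 1 - pW x w) x"
proof -
  obtain ps psw q where "t = ps x" "model2 W ps psw q" "C q"
    "\<forall>x w. w \<in> W \<longrightarrow> obs2 psw q x w = pW x w"
    using assms unfolding ident2_def by blast
  then show ?thesis
    unfolding ident2_def
    by (intro CollectI exI[of _ "\<lambda>x. 1 - ps x"] exI[of _ "\<lambda>x w. 1 - psw x w"]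
        exI[of _ "flip_kernel2 q"])
      (simp add: model2_flip obs2_flip)
qed

lemma ident2_flip:
  "ident2 W C pW x = (-) 1 ` ident2 W (\<lambda>q. C (flip_kernel2 q)) (\<lambda>x w. 1 - pW x w) x"
proof
  show "ident2 W C pW x \<subseteq> (-) 1 ` ident2 W (\<lambda>q. C (flip_kernel2 q)) (\<lambda>x w. 1 - pW x w) x"
  proof
    fix t assume "t \<in> ident2 W C pW x"
    then have "1 - t \<in> ident2 W (\<lambda>q. C (flip_kernel2 q)) (\<lambda>x w. 1 - pW x w) x"
      by (rule ident2_flip_mem)
    then show "t \<in> (-) 1 ` ident2 W (\<lambda>q. C (flip_kernel2 q)) (\<lambda>x w. 1 - pW x w) x"
      by (rule image_eqI[rotated]) simp
  qed
  show "(-) 1 ` ident2 W (\<lambda>q. C (flip_kernel2 q)) (\<lambda>x w. 1 - pW x w) x \<subseteq> ident2 W C pW x"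
    using ident2_flip_mem[of _ W "\<lambda>q. C (flip_kernel2 q)" "\<lambda>x w. 1 - pW x w" x] by auto
qed

lemma pup2_flip:
  assumes "finite W" "w \<in> W"
  shows "pup2 W (\<lambda>x w. 1 - pW x w) x w = 1 - plow2 W pW x w"
  unfolding pup2_def plow2_def using assms by (intro SUP_const_minus) auto

lemma L2_eq_flip_U2:
  assumes fin: "finite W" and "W \<noteq> {}" and lt1: "\<forall>w\<in>W. pW x w < 1"
  shows "L2 W pW x = 1 - U2 W (\<lambda>x w. 1 - pW x w) x"
proof -
  have "(pW x w - plow2 W pW x w) / (1 - plow2 W pW x w)
          = 1 - (1 - pW x w) / pup2 W (\<lambda>x w. 1 - pW x w) x w" if w: "w \<in> W" for w
  proof -
    have "plow2 W pW x w \<le> pW x w"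
      unfolding plow2_def using fin w by (auto intro: cINF_lower bdd_below_finite)
    then have "plow2 W pW x w \<noteq> 1" using lt1 w by fastforce
    then show ?thesis by (simp add: pup2_flip[OF fin w] field_simps)
  qed
  then have "L2 W pW x = (SUP w\<in>W. 1 - (1 - pW x w) / pup2 W (\<lambda>x w. 1 - pW x w) x w)"
    unfolding L2_def by (rule SUP_cong[OF refl])
  also have "\<dots> = 1 - U2 W (\<lambda>x w. 1 - pW x w) x"
    unfolding U2_def using fin \<open>W \<noteq> {}\<close> by (intro SUP_const_minus) auto
  finally show ?thesis .
qed

lemma ident2_no_false_negatives:
  assumes fin: "finite W" and ne: "W \<noteq> {}" and "model2 W ps psw q"
    and "\<forall>w\<in>W. misr2 q True x w = 0" "\<forall>w\<in>W. obs2 psw q x w < 1"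
  shows "ident2 W (\<lambda>q'. \<forall>w\<in>W. misr2 q' True x w = 0) (obs2 psw q) x
           = {L2 W (obs2 psw q) x .. (INF w\<in>W. obs2 psw q x w)}"
proof -
  have "ident2 W (\<lambda>q'. \<forall>w\<in>W. misr2 q' False x w = 0) (\<lambda>x w. 1 - obs2 psw q x w) x
          = {(SUP w\<in>W. 1 - obs2 psw q x w) .. U2 W (\<lambda>x w. 1 - obs2 psw q x w) x}"
    using ident2_no_false_positives[of W "\<lambda>x. 1 - ps x" "\<lambda>x w. 1 - psw x w" "flip_kernel2 q" x]
    using assms by (simp add: model2_flip obs2_flip flip_kernel2_def)
  moreover have "(SUP w\<in>W. 1 - obs2 psw q x w) = 1 - (INF w\<in>W. obs2 psw q x w)"
    using fin ne by (intro SUP_const_minus) auto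
  ultimately show ?thesis
    using assms by (simp add: ident2_flip[of W _ "obs2 psw q"] flip_kernel2_def L2_eq_flip_U2)
qed

theorem proposition3:
  fixes ps1 :: "'a \<times> 'z::finite \<Rightarrow> real" and q1 :: "bool \<Rightarrow> 'a \<times> 'z \<Rightarrow> real"
    and qt1 :: "bool \<Rightarrow> 'a \<Rightarrow> real" and xt :: 'a and z :: 'z
    and W :: "real set" and ps2 :: "'x \<Rightarrow> real" and psw2 :: "'x \<Rightarrow> real \<Rightarrow> real"
    and q2 :: "bool \<Rightarrow> 'x \<Rightarrow> real \<Rightarrow> real" and x :: 'x
  shows
   "(model1 ps1 q1 qt1 \<and>
     (\<forall>xt'. pup1 (obs1 ps1 q1) xt' > 0) \<and> (\<forall>xt'. plow1 (obs1 ps1 q1) xt' < 1) \<longrightarrow>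
       (misr qt1 False xt = 0 \<longrightarrow>
          ident1 (\<lambda>qt'. misr qt' False xt = 0) (obs1 ps1 q1) (xt, z)
            = {obs1 ps1 q1 (xt, z) .. U1 (obs1 ps1 q1) (xt, z)}) \<and>
       (misr qt1 True xt = 0 \<longrightarrow>
          ident1 (\<lambda>qt'. misr qt' True xt = 0) (obs1 ps1 q1) (xt, z)
            = {L1 (obs1 ps1 q1) (xt, z) .. obs1 ps1 q1 (xt, z)}))
    \<and>
    (finite W \<and> W \<noteq> {} \<and> model2 W ps2 psw2 q2 \<and>
     (\<forall>x' w. w \<in> W \<longrightarrow> 0 < obs2 psw2 q2 x' w \<and> obs2 psw2 q2 x' w < 1) \<longrightarrow>
       ((\<forall>w\<in>W. misr2 q2 False x w = 0) \<longrightarrow>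
          ident2 W (\<lambda>q'. \<forall>w\<in>W. misr2 q' False x w = 0) (obs2 psw2 q2) x
            = {(SUP w\<in>W. obs2 psw2 q2 x w) .. U2 W (obs2 psw2 q2) x}) \<and>
       ((\<forall>w\<in>W. misr2 q2 True x w = 0) \<longrightarrow>
          ident2 W (\<lambda>q'. \<forall>w\<in>W. misr2 q' True x w = 0) (obs2 psw2 q2) x
            = {L2 W (obs2 psw2 q2) x .. (INF w\<in>W. obs2 psw2 q2 x w)}))"
  using ident1_no_false_positives[of ps1 q1 qt1 xt z] ident1_no_false_negatives[of ps1 q1 qt1 xt z]
    ident2_no_false_positives[of W ps2 psw2 q2 x] ident2_no_false_negatives[of W ps2 psw2 q2 x]
  by blast

end
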